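(* For any $x\in\mathbb{R}^n$ and $\widehat{\mathbf{A}}=(\mathbf{A}_1,\dots,\mathbf{A}_n)\in I(\mathbb{R})^n$, \[x^T\odot\widehat{\mathbf{A}}\preceq\|x\|\odot\big[\|\widehat{\mathbf{A}}\|_{I(\mathbb{R})^n},\|\widehat{\mathbf{A}}\|_{I(\mathbb{R})^n}\big].\]
   Context: $I(\mathbb{R})$: nonempty compact intervals $\mathbf{A}=[\underline{a},\overline{a}]$; $\mathbf{A}\oplus\mathbf{B}=[\underline{a}+\underline{b},\overline{a}+\overline{b}]$; $\lambda\odot\mathbf{A}=[\min\{\lambda\underline{a},\lambda\overline{a}\},\max\{\lambda\underline{a},\lambda\overline{a}\}]$; $x^T\odot\widehat{\mathbf{A}}=\bigoplus_{i=1}^n x_i\odot\mathbf{A}_i$; $\mathbf{A}\preceq\mathbf{B}$ iff $\underline{a}\le\underline{b}$ and $\overline{a}\le\overline{b}$; $\|\mathbf{A}\|_{I(\mathbb{R})}=\max\{|\underline{a}|,|\overline{a}|\}$; $\|\widehat{\mathbf{A}}\|_{I(\mathbb{R})^n}=\sqrt{\sum_i\|\mathbf{A}_i\|_{I(\mathbb{R})}^2}$; $\|x\|$ Euclidean norm. *)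

theory Defs
  imports "HOL-Analysis.Analysis"
begin

text \<open>Compact intervals [a_lo, a_hi] are represented as pairs (a_lo, a_hi) with a_lo \<le> a_hi.\<close>

type_synonym ival = "real \<times> real"

definition is_ival :: "ival \<Rightarrow> bool" where
  "is_ival A \<longleftrightarrow> fst A \<le> snd A"

definition iadd :: "ival \<Rightarrow> ival \<Rightarrow> ival" where
  "iadd A B = (fst A + fst B, snd A + snd B)"

definition iscale :: "real \<Rightarrow> ival \<Rightarrow> ival" where
  "iscale l A = (min (l * fst A) (l * snd A), max (l * fst A) (l * snd A))"

text \<open>Finite interval sum (iterated iadd, starting from [0,0]).\<close>
definition isum :: "('i \<Rightarrow> ival) \<Rightarrow> 'i set \<Rightarrow> ival" where
  "isum f S = (\<Sum>i\<in>S. fst (f i), \<Sum>i\<in>S. snd (f i))"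

definition ivec_dot :: "real ^ 'n \<Rightarrow> (ival ^ 'n) \<Rightarrow> ival" where
  "ivec_dot x A = isum (\<lambda>i. iscale (x $ i) (A $ i)) UNIV"

definition ile :: "ival \<Rightarrow> ival \<Rightarrow> bool" where
  "ile A B \<longleftrightarrow> fst A \<le> fst B \<and> snd A \<le> snd B"

definition inorm :: "ival \<Rightarrow> real" where
  "inorm A = max \<bar>fst A\<bar> \<bar>snd A\<bar>"

definition ivec_norm :: "ival ^ 'n \<Rightarrow> real" where
  "ivec_norm A = sqrt (\<Sum>i\<in>UNIV. (inorm (A $ i))^2)"

end

theory Submission
  imports Defs
begin

text \<open>Each endpoint of \<open>x\<^sup>T \<odot> A\<close> is bounded by the interval norm of the sum. That norm is
  subadditive and absolutely homogeneous, so it is at most \<open>\<Sum>\<^sub>i \<bar>x\<^sub>i\<bar> \<parallel>A\<^sub>i\<parallel>\<close>, and Cauchy-Schwarz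
  bounds this by \<open>\<parallel>x\<parallel> \<parallel>A\<parallel>\<close>.\<close>

lemma fst_le_inorm: "fst A \<le> inorm A"
  and snd_le_inorm: "snd A \<le> inorm A"
  by (auto simp: inorm_def)

lemma inorm_iscale: "inorm (iscale l A) = \<bar>l\<bar> * inorm A"
proof -
  have "inorm (iscale l A) = max \<bar>l * fst A\<bar> \<bar>l * snd A\<bar>"
    by (cases "l * fst A \<le> l * snd A") (auto simp: inorm_def iscale_def max.commute)
  also have "\<dots> = \<bar>l\<bar> * inorm A"
    by (simp add: inorm_def abs_mult max_mult_distrib_left)
  finally show ?thesis .
qed

lemma inorm_isum_le: "inorm (isum f S) \<le> (\<Sum>i\<in>S. inorm (f i))"
proof -
  have "\<bar>\<Sum>i\<in>S. g i\<bar> \<le> (\<Sum>i\<in>S. inorm (f i))"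
    if "\<And>i. \<bar>g i\<bar> \<le> inorm (f i)" for g
    using sum_abs[of g S] sum_mono[of S "\<lambda>i. \<bar>g i\<bar>", OF that] by linarith
  then show ?thesis
    by (simp add: inorm_def isum_def)
qed

lemma inorm_ivec_dot_le: "inorm (ivec_dot x A) \<le> norm x * ivec_norm A"
proof -
  have "inorm (ivec_dot x A) \<le> (\<Sum>i\<in>UNIV. \<bar>x $ i\<bar> * inorm (A $ i))"
    using inorm_isum_le[of "\<lambda>i. iscale (x $ i) (A $ i)"]
    by (simp add: ivec_dot_def inorm_iscale)
  also have "\<dots> = (\<Sum>i\<in>UNIV. \<bar>x $ i\<bar> * \<bar>inorm (A $ i)\<bar>)"
    by (simp add: inorm_def)
  also have "\<dots> \<le> L2_set (\<lambda>i. x $ i) UNIV * L2_set (\<lambda>i. inorm (A $ i)) UNIV"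
    by (rule L2_set_mult_ineq)
  also have "\<dots> = norm x * ivec_norm A"
    by (simp add: norm_vec_def ivec_norm_def L2_set_def)
  finally show ?thesis .
qed

theorem mainTheorem12:
  fixes x :: "real ^ 'n" and A :: "ival ^ 'n"
  assumes "\<forall>i. is_ival (A $ i)"
  shows "ile (ivec_dot x A) (iscale (norm x) (ivec_norm A, ivec_norm A))"
  using inorm_ivec_dot_le[of x A] fst_le_inorm[of "ivec_dot x A"] snd_le_inorm[of "ivec_dot x A"]
  by (simp add: ile_def iscale_def)

end
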